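(* There is an absolute constant $c>0$ such that for all integers $n\ge2$, every prime power $q$, every real $\sigma\ge1$, and every $\sigma$-secure $n$-party one-round aggregation protocol over $\mathbb{F}_q$ in the anonymized model in which each party sends $m$ messages, we have $m\ge c\,\frac{\log q}{\log n}$.
   Context: An $n$-party one-round aggregation protocol over $\mathbb{F}_q$ with $m$ messages per party consists of a randomized encoder $\mathsf{Enc}:\mathbb{F}_q\to[\ell]^m$ (for some positive integer $\ell$; each party applies it to its input with independent randomness) and an analyzer $\mathcal{A}:[\ell]^{nm}\to\mathbb{F}_q$ such that for every $\mathbf{x}\in\mathbb{F}_q^n$, every possible realization of the encodings $\mathsf{Enc}(x_1),\dots,\mathsf{Enc}(x_n)$, and every permutation $\pi$ of $[nm]$, the analyzer applied to the concatenation $(\mathsf{Enc}(x_1),\dots,\mathsf{Enc}(x_n))$ with coordinates permuted by $\pi$ outputs $\sum_i x_i$. For $\mathbf{x}\in\mathbb{F}_q^n$, $\mathcal{S}^{\mathsf{Enc}}_{\mathbf{x}}$ is the distribution on $[\ell]^{nm}$ of this concatenation after applying an independent uniformly random permutation of the $nm$ coordinates. The protocol is $\sigma$-secure if $\mathrm{SD}(\mathcal{S}^{\mathsf{Enc}}_{\mathbf{x}},\mathcal{S}^{\mathsf{Enc}}_{\mathbf{x}'})\le2^{-\sigma}$ for all $\mathbf{x},\mathbf{x}'\in\mathbb{F}_q^n$ with $\sum_ix_i=\sum_ix'_i$, where $\mathrm{SD}$ is statistical distance. *)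

theory Defs
  imports "HOL-Probability.Probability" "HOL-Algebra.Ring" "HOL-Combinatorics.Permutations"
begin

fun enc_all :: "('x \<Rightarrow> 'm list pmf) \<Rightarrow> 'x list \<Rightarrow> 'm list list pmf" where
  "enc_all Enc [] = return_pmf []"
| "enc_all Enc (x # xs) = bind_pmf (Enc x) (\<lambda>y. bind_pmf (enc_all Enc xs) (\<lambda>ys. return_pmf (y # ys)))"

definition shuffled_view :: "('x \<Rightarrow> 'm list pmf) \<Rightarrow> nat \<Rightarrow> 'x list \<Rightarrow> 'm list pmf" where
  "shuffled_view Enc N xs =
     bind_pmf (enc_all Enc xs) (\<lambda>ys.
       bind_pmf (pmf_of_set {\<pi>. \<pi> permutes {..<N}}) (\<lambda>\<pi>.
         return_pmf (permute_list \<pi> (concat ys))))"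

definition stat_dist :: "'a pmf \<Rightarrow> 'a pmf \<Rightarrow> real" where
  "stat_dist p p' = (SUP A. \<bar>measure_pmf.prob p A - measure_pmf.prob p' A\<bar>)"

definition is_agg_protocol ::
  "(nat, 'b) ring_scheme \<Rightarrow> nat \<Rightarrow> nat \<Rightarrow> nat \<Rightarrow> (nat \<Rightarrow> nat list pmf) \<Rightarrow> (nat list \<Rightarrow> nat) \<Rightarrow> bool" where
  "is_agg_protocol R n m l Enc A \<longleftrightarrow>
     l > 0 \<and>
     (\<forall>x \<in> carrier R. \<forall>y \<in> set_pmf (Enc x). length y = m \<and> set y \<subseteq> {..<l}) \<and>
     (\<forall>xs ys \<pi>. length xs = n \<longrightarrow> set xs \<subseteq> carrier R \<longrightarrow>
        list_all2 (\<lambda>x y. y \<in> set_pmf (Enc x)) xs ys \<longrightarrow>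
        \<pi> permutes {..<n * m} \<longrightarrow>
        A (permute_list \<pi> (concat ys)) = finsum R (\<lambda>i. xs ! i) {..<n})"

definition is_secure ::
  "(nat, 'b) ring_scheme \<Rightarrow> nat \<Rightarrow> nat \<Rightarrow> (nat \<Rightarrow> nat list pmf) \<Rightarrow> real \<Rightarrow> bool" where
  "is_secure R n m Enc \<sigma> \<longleftrightarrow>
     (\<forall>xs xs'. length xs = n \<longrightarrow> length xs' = n \<longrightarrow>
        set xs \<subseteq> carrier R \<longrightarrow> set xs' \<subseteq> carrier R \<longrightarrow>
        finsum R (\<lambda>i. xs ! i) {..<n} = finsum R (\<lambda>i. xs' ! i) {..<n} \<longrightarrow>
        stat_dist (shuffled_view Enc (n * m) xs) (shuffled_view Enc (n * m) xs') \<le> 2 powr (- \<sigma>))"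

end

theory Submission
  imports Defs
begin

text \<open>
  For every \<open>x\<close> the input \<open>(x, -x, 0, \<dots>, 0)\<close> has sum \<open>0\<close>, so by \<open>\<sigma>\<close>-security with
  \<open>\<sigma> \<ge> 1\<close> all their shuffled views \<open>V\<^sub>x\<close> lie within statistical distance \<open>1/2\<close> of \<open>V\<^sub>0\<close>,
  and \<open>V\<^sub>0\<close> gives mass at least \<open>1/2\<close> to the support of every \<open>V\<^sub>x\<close>. On the other hand a
  single view \<open>S\<close> lies in the support of \<open>V\<^sub>x\<close> for at most \<open>C(nm, m)\<close> values of \<open>x\<close>:
  the set of \<open>m\<close> positions of \<open>S\<close> carrying the first party's messages determines \<open>x\<close>,
  since exchanging the first party's encoding for an encoding of \<open>x'\<close> with the same
  messages leaves the multiset of all messages, hence the analyzer's output \<open>x' - x\<close>,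
  unchanged. Double counting gives \<open>q/2 \<le> C(nm, m) \<le> (e n)\<^sup>m\<close>, so \<open>m \<ge> log q / (4 log n)\<close>.
\<close>

lemma set_pmf_enc_all:
  "set_pmf (enc_all Enc xs) = {ys. list_all2 (\<lambda>x y. y \<in> set_pmf (Enc x)) xs ys}"
  by (induction xs) (auto simp: list_all2_Cons1)

lemma set_pmf_shuffled_view:
  "set_pmf (shuffled_view Enc N xs) =
     {permute_list \<pi> (concat ys) | ys \<pi>.
        list_all2 (\<lambda>x y. y \<in> set_pmf (Enc x)) xs ys \<and> \<pi> permutes {..<N}}"
proof -
  have "{\<pi>. \<pi> permutes {..<N}} \<noteq> {}"
    using permutes_id by blast
  then show ?thesis
    by (auto simp: shuffled_view_def set_pmf_enc_all finite_permutations)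
qed

lemma prob_diff_le_stat_dist:
  "\<bar>measure_pmf.prob p A - measure_pmf.prob p' A\<bar> \<le> stat_dist p p'"
  unfolding stat_dist_def
proof (rule cSUP_upper)
  show "bdd_above (range (\<lambda>A. \<bar>measure_pmf.prob p A - measure_pmf.prob p' A\<bar>))"
  proof (rule bdd_aboveI2)
    fix A
    show "\<bar>measure_pmf.prob p A - measure_pmf.prob p' A\<bar> \<le> 1"
      using measure_pmf.prob_le_1[of p A] measure_pmf.prob_le_1[of p' A]
        measure_nonneg[of p A] measure_nonneg[of p' A] by linarith
  qed
qed simp

lemma prob_set_pmf_ge_one_minus_stat_dist:
  "1 - stat_dist p p' \<le> measure_pmf.prob p (set_pmf p')"
proof -
  have "measure_pmf.prob p' (- set_pmf p') = 0"
    by (simp add: measure_pmf_zero_iff)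
  then have "measure_pmf.prob p (- set_pmf p') \<le> stat_dist p p'"
    using prob_diff_le_stat_dist[of p "- set_pmf p'" p'] by simp
  then show ?thesis
    using measure_pmf.prob_compl[of "set_pmf p'" p] by (simp add: Compl_eq_Diff_UNIV)
qed

lemma sum_prob_le_max_multiplicity:
  assumes "finite X" and "\<And>a. card {x \<in> X. a \<in> B x} \<le> k"
  shows "(\<Sum>x\<in>X. measure_pmf.prob p (B x)) \<le> k"
proof -
  have "(\<Sum>x\<in>X. measure_pmf.prob p (B x))
      = (\<Sum>x\<in>X. measure_pmf.expectation p (indicator (B x)))"
    by simp
  also have "\<dots> = measure_pmf.expectation p (\<lambda>a. \<Sum>x\<in>X. indicator (B x) a)"
    by (rule Bochner_Integration.integral_sum[symmetric])
      (simp add: measure_pmf.integrable_const_bound[where B=1])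
  also have "\<dots> \<le> k"
  proof (rule measure_pmf.integral_le_const)
    show "integrable (measure_pmf p) (\<lambda>a. \<Sum>x\<in>X. indicat_real (B x) a)"
      by (intro Bochner_Integration.integrable_sum) (simp add: measure_pmf.integrable_const_bound[where B=1])
    have "(\<Sum>x\<in>X. indicat_real (B x) a) = card {x \<in> X. a \<in> B x}" for a
      using assms(1) by (simp add: indicator_def sum.If_cases Int_def)
    then show "AE a in measure_pmf p. (\<Sum>x\<in>X. indicat_real (B x) a) \<le> k"
      using assms(2) by simp
  qed
  finally show ?thesis .
qed

lemma card_le_card_of_unique_witness:
  assumes "finite B" and "\<And>a. a \<in> A \<Longrightarrow> \<exists>b\<in>B. W a b"
    and "\<And>a a' b. a \<in> A \<Longrightarrow> a' \<in> A \<Longrightarrow> W a b \<Longrightarrow> W a' b \<Longrightarrow> a = a'"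
  shows "card A \<le> card B"
proof -
  obtain f where "\<And>a. a \<in> A \<Longrightarrow> f a \<in> B \<and> W a (f a)"
    using assms(2) by metis
  then have "inj_on f A" and "f ` A \<subseteq> B"
    using assms(3) by (fastforce intro: inj_onI)+
  then show ?thesis
    using assms(1) by (rule card_inj_on_le)
qed

lemma power_div_fact_le_exp:
  fixes x :: real
  assumes "0 \<le> x"
  shows "x ^ k / fact k \<le> exp x"
proof -
  have "(\<lambda>i. x ^ i / fact i) sums exp x"
    using exp_converges[of x] by (simp add: divide_inverse_commute)
  moreover have "0 \<le> x ^ i / fact i" for i
    using assms by simp
  ultimately show ?thesis
    using sum_le_suminf[of "\<lambda>i. x ^ i / fact i" "{k}"] by (simp add: sums_iff)
qed

lemma binomial_le_exp_power:
  assumes "0 < k"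
  shows "real (N choose k) \<le> (exp 1 * real N / real k) ^ k"
proof -
  have "real (N choose k) * fact k \<le> real N ^ k"
    using binomial_fact_pow[of N k] by (metis of_nat_fact of_nat_le_iff of_nat_mult of_nat_power)
  then have "real (N choose k) \<le> real N ^ k / fact k"
    by (simp add: field_simps)
  also have "\<dots> = (real N / real k) ^ k * (real k ^ k / fact k)"
    using assms by (simp add: power_divide)
  also have "\<dots> \<le> (real N / real k) ^ k * exp (real k)"
    by (intro mult_left_mono power_div_fact_le_exp) auto
  also have "\<dots> = (exp 1 * real N / real k) ^ k"
    using exp_of_nat_mult[of k "1::real"] by (simp add: power_divide power_mult_distrib)
  finally show ?thesis .
qed

lemma two_binomial_mult_le_power:
  assumes "2 \<le> n" and "0 < m"
  shows "2 * real (n * m choose m) \<le> real n ^ (4 * m)"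
proof -
  have "2 \<le> n ^ m"
    using power_increasing[of 1 m n] assms by simp
  then have two_le: "2 \<le> real n ^ m"
    by (metis of_nat_le_iff of_nat_numeral of_nat_power)
  have "exp 1 \<le> real n ^ 2"
    using exp_le power_mono[of 2 "real n" 2] assms(1) by simp
  have "real (n * m choose m) \<le> (exp 1 * real n) ^ m"
    using binomial_le_exp_power[OF assms(2), of "n * m"] assms by simp
  also have "\<dots> \<le> (real n ^ 2 * real n) ^ m"
    using \<open>exp 1 \<le> real n ^ 2\<close> by (intro power_mono mult_right_mono) auto
  also have "\<dots> = real n ^ (3 * m)"
    unfolding power_mult by (simp add: power3_eq_cube power2_eq_square)
  finally have "real (n * m choose m) \<le> real n ^ (3 * m)" .
  with two_le have "2 * real (n * m choose m) \<le> real n ^ m * real n ^ (3 * m)"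
    by (intro mult_mono) auto
  then show ?thesis
    by (simp add: power_add[symmetric])
qed

lemma mset_take_eq_image_permute_list:
  assumes \<pi>: "\<pi> permutes {..<length xs}" and k: "k \<le> length xs"
  obtains I where "I \<subseteq> {..<length xs}" and "card I = k"
    and "mset (take k xs) = image_mset ((!) (permute_list \<pi> xs)) (mset_set I)"
proof -
  define I where "I = {i. i < length xs \<and> \<pi> i < k}"
  have I: "I \<subseteq> {..<length xs}" and "finite I"
    by (auto simp: I_def)
  have inj: "inj_on \<pi> I"
    using permutes_inj[OF \<pi>] by (auto intro: inj_on_subset)
  have img: "\<pi> ` I = {..<k}"
  proof
    show "\<pi> ` I \<subseteq> {..<k}"
      by (auto simp: I_def)
    show "{..<k} \<subseteq> \<pi> ` I"
    proof
      fix j assume "j \<in> {..<k}"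
      then have "j \<in> \<pi> ` {..<length xs}"
        using permutes_image[OF \<pi>] k by auto
      with \<open>j \<in> {..<k}\<close> show "j \<in> \<pi> ` I"
        by (auto simp: I_def)
    qed
  qed
  have "image_mset ((!) (permute_list \<pi> xs)) (mset_set I) = image_mset ((!) xs \<circ> \<pi>) (mset_set I)"
    using \<open>finite I\<close> by (intro image_mset_cong) (simp add: I_def permute_list_nth[OF \<pi>])
  also have "\<dots> = image_mset ((!) xs) (mset_set {..<k})"
    by (simp add: image_mset_mset_set[OF inj] img flip: multiset.map_comp)
  also have "\<dots> = mset (take k xs)"
  proof -
    have "take k xs = map ((!) xs) [0..<k]"
      using k by (intro nth_equalityI) auto
    then show ?thesis
      by (simp add: lessThan_atLeast0 flip: mset_upt)
  qed
  finally show ?thesis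
    using that[OF I] card_image[OF inj] img by simp
qed

locale agg_protocol = abelian_group R for R :: "(nat, 'b) ring_scheme" (structure) +
  fixes n m l :: nat and Enc :: "nat \<Rightarrow> nat list pmf" and A :: "nat list \<Rightarrow> nat"
  assumes two_le_parties: "2 \<le> n"
    and protocol: "is_agg_protocol R n m l Enc A"
begin

abbreviation encodes :: "nat list \<Rightarrow> nat list list \<Rightarrow> bool" where
  "encodes xs ys \<equiv> list_all2 (\<lambda>x y. y \<in> set_pmf (Enc x)) xs ys"

lemma length_encoding: "x \<in> carrier R \<Longrightarrow> y \<in> set_pmf (Enc x) \<Longrightarrow> length y = m"
  using protocol unfolding is_agg_protocol_def by blast

lemma length_concat_encodes:
  "encodes xs ys \<Longrightarrow> set xs \<subseteq> carrier R \<Longrightarrow> length (concat ys) = length xs * m"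
  by (induction rule: list_all2_induct) (auto simp: length_encoding)

lemma analyzer_correct:
  "length xs = n \<Longrightarrow> set xs \<subseteq> carrier R \<Longrightarrow> encodes xs ys \<Longrightarrow> \<pi> permutes {..<n * m} \<Longrightarrow>
    A (permute_list \<pi> (concat ys)) = finsum R (\<lambda>i. xs ! i) {..<n}"
  using protocol unfolding is_agg_protocol_def by blast

lemma input_sum_eq_if_mset_concat_eq:
  assumes xs: "length xs = n" "set xs \<subseteq> carrier R" "encodes xs ys"
    and xs': "length xs' = n" "set xs' \<subseteq> carrier R" "encodes xs' ys'"
    and "mset (concat ys) = mset (concat ys')"
  shows "finsum R (\<lambda>i. xs ! i) {..<n} = finsum R (\<lambda>i. xs' ! i) {..<n}"
proof -
  obtain \<pi> where \<pi>: "\<pi> permutes {..<length (concat ys')}" "permute_list \<pi> (concat ys') = concat ys"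
    using assms(7) by (rule mset_eq_permutation)
  have "length (concat ys') = n * m"
    using length_concat_encodes[OF xs'(3,2)] xs'(1) by simp
  then have "\<pi> permutes {..<n * m}"
    using \<pi>(1) by simp
  then have "A (concat ys) = finsum R (\<lambda>i. xs' ! i) {..<n}"
    using analyzer_correct[OF xs'] \<pi>(2) by metis
  moreover have "A (concat ys) = finsum R (\<lambda>i. xs ! i) {..<n}"
    using analyzer_correct[OF xs permutes_id] by simp
  ultimately show ?thesis
    by simp
qed

definition pair_input :: "nat \<Rightarrow> nat \<Rightarrow> nat list" where
  "pair_input a b = a # b # replicate (n - 2) \<zero>"

lemma length_pair_input [simp]: "length (pair_input a b) = n"
  using two_le_parties by (simp add: pair_input_def)

lemma set_pair_input_subset:
  "a \<in> carrier R \<Longrightarrow> b \<in> carrier R \<Longrightarrow> set (pair_input a b) \<subseteq> carrier R"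
  by (auto simp: pair_input_def)

lemma sum_pair_input:
  assumes "a \<in> carrier R" and "b \<in> carrier R"
  shows "finsum R (\<lambda>i. pair_input a b ! i) {..<n} = a \<oplus> b"
proof -
  have "{..<n} = insert 0 (insert 1 {2..<n})"
    using two_le_parties by auto
  moreover have "pair_input a b ! i \<in> carrier R" if "i < n" for i
    using set_pair_input_subset[OF assms] nth_mem[of i "pair_input a b"] that by auto
  moreover have "finsum R (\<lambda>i. pair_input a b ! i) {2..<n} = finsum R (\<lambda>i. \<zero>) {2..<n}"
    by (intro finsum_cong') (auto simp: pair_input_def nth_Cons')
  moreover have "pair_input a b ! 0 = a" and "pair_input a b ! 1 = b"
    by (simp_all add: pair_input_def)
  ultimately show ?thesis
    using assms by (simp add: finsum_insert Pi_iff)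
qed

lemma encodes_pair_inputE:
  assumes "encodes (pair_input a b) ys"
  obtains rest where "ys = hd ys # rest" and "hd ys \<in> set_pmf (Enc a)"
    and "encodes (b # replicate (n - 2) \<zero>) rest"
  using assms by (auto simp: pair_input_def list_all2_Cons1)

definition pair_view :: "nat \<Rightarrow> nat list pmf" where
  "pair_view x = shuffled_view Enc (n * m) (pair_input x (\<ominus> x))"

lemma first_encoding_determines_input:
  assumes x: "x \<in> carrier R" and x': "x' \<in> carrier R"
    and ys: "encodes (pair_input x (\<ominus> x)) ys"
    and y': "y' \<in> set_pmf (Enc x')" and "mset y' = mset (hd ys)"
  shows "x' = x"
proof -
  obtain rest where ys_eq: "ys = hd ys # rest" and rest: "encodes (\<ominus> x # replicate (n - 2) \<zero>) rest"
    using ys by (rule encodes_pair_inputE)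
  have "encodes (pair_input x' (\<ominus> x)) (y' # rest)"
    using y' rest by (simp add: pair_input_def)
  moreover have "mset (concat ys) = mset (concat (y' # rest))"
    using ys_eq \<open>mset y' = mset (hd ys)\<close> by (metis concat.simps(2) mset_append)
  ultimately have "x \<oplus> \<ominus> x = x' \<oplus> \<ominus> x"
    using input_sum_eq_if_mset_concat_eq[of "pair_input x (\<ominus> x)" ys "pair_input x' (\<ominus> x)"]
      ys x x' set_pair_input_subset sum_pair_input by simp
  then show ?thesis
    using x x' by simp
qed

lemma card_inputs_with_view_le:
  "card {x \<in> carrier R. S \<in> set_pmf (pair_view x)} \<le> n * m choose m"
proof -
  define W where "W x I \<longleftrightarrow>
    (\<exists>ys. encodes (pair_input x (\<ominus> x)) ys \<and> mset (hd ys) = image_mset ((!) S) (mset_set I))" for x I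
  have "card {x \<in> carrier R. S \<in> set_pmf (pair_view x)} \<le> card {I. I \<subseteq> {..<n * m} \<and> card I = m}"
  proof (rule card_le_card_of_unique_witness[where W = W])
    show "finite {I. I \<subseteq> {..<n * m} \<and> card I = m}"
      by (rule finite_subset[of _ "Pow {..<n * m}"]) auto
  next
    fix x assume "x \<in> {x \<in> carrier R. S \<in> set_pmf (pair_view x)}"
    then obtain ys \<pi> where x: "x \<in> carrier R" and ys: "encodes (pair_input x (\<ominus> x)) ys"
      and \<pi>: "\<pi> permutes {..<n * m}" and S: "S = permute_list \<pi> (concat ys)"
      unfolding pair_view_def set_pmf_shuffled_view by blast
    obtain rest where ys_eq: "ys = hd ys # rest" and "hd ys \<in> set_pmf (Enc x)"
      using ys by (rule encodes_pair_inputE)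
    then have "hd ys = take m (concat ys)"
      using length_encoding[OF x] by (metis append_eq_conv_conj concat.simps(2))
    moreover have len: "length (concat ys) = n * m"
      using length_concat_encodes[OF ys] set_pair_input_subset x by simp
    ultimately obtain I where "I \<subseteq> {..<n * m}" "card I = m"
      "mset (hd ys) = image_mset ((!) S) (mset_set I)"
      using mset_take_eq_image_permute_list[of \<pi> "concat ys" m] \<pi> two_le_parties S by auto
    then show "\<exists>I\<in>{I. I \<subseteq> {..<n * m} \<and> card I = m}. W x I"
      using ys unfolding W_def by blast
  next
    fix x x' I
    assume "x \<in> {x \<in> carrier R. S \<in> set_pmf (pair_view x)}"
      and "x' \<in> {x \<in> carrier R. S \<in> set_pmf (pair_view x)}"
      and "W x I" "W x' I"
    then obtain ys ys' where x: "x \<in> carrier R" and x': "x' \<in> carrier R"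
      and ys: "encodes (pair_input x (\<ominus> x)) ys" and ys': "encodes (pair_input x' (\<ominus> x')) ys'"
      and "mset (hd ys') = mset (hd ys)"
      unfolding W_def by auto
    moreover have "hd ys' \<in> set_pmf (Enc x')"
      using ys' by (rule encodes_pair_inputE)
    ultimately show "x = x'"
      using first_encoding_determines_input by metis
  qed
  also have "\<dots> = n * m choose m"
    using n_subsets[of "{..<n * m}" m] by simp
  finally show ?thesis .
qed

lemma prob_pair_view_ge_half:
  assumes "is_secure R n m Enc \<sigma>" and "1 \<le> \<sigma>" and "x \<in> carrier R"
  shows "1 / 2 \<le> measure_pmf.prob (pair_view \<zero>) (set_pmf (pair_view x))"
proof -
  have "finsum R (\<lambda>i. pair_input \<zero> (\<ominus> \<zero>) ! i) {..<n}
      = finsum R (\<lambda>i. pair_input x (\<ominus> x) ! i) {..<n}"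
    using assms(3) r_neg[OF zero_closed] r_neg[OF assms(3)] by (simp add: sum_pair_input)
  then have "stat_dist (pair_view \<zero>) (pair_view x) \<le> 2 powr - \<sigma>"
    using assms(1,3) set_pair_input_subset[of \<zero> "\<ominus> \<zero>"] set_pair_input_subset[of x "\<ominus> x"]
    unfolding is_secure_def pair_view_def by simp
  also have "\<dots> \<le> 2 powr - 1"
    using assms(2) by (intro powr_mono) auto
  finally show ?thesis
    using prob_set_pmf_ge_one_minus_stat_dist[of "pair_view \<zero>" "pair_view x"] by (simp add: powr_minus)
qed

lemma card_carrier_le_binomial:
  assumes "is_secure R n m Enc \<sigma>" and "1 \<le> \<sigma>" and "finite (carrier R)"
  shows "real (card (carrier R)) \<le> 2 * real (n * m choose m)"
proof -
  have "real (card (carrier R)) * (1 / 2)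
      \<le> (\<Sum>x\<in>carrier R. measure_pmf.prob (pair_view \<zero>) (set_pmf (pair_view x)))"
    using prob_pair_view_ge_half[OF assms(1,2)] by (rule sum_bounded_below)
  also have "\<dots> \<le> real (n * m choose m)"
    using assms(3) card_inputs_with_view_le by (rule sum_prob_le_max_multiplicity)
  finally show ?thesis
    by simp
qed

lemma num_messages_pos:
  assumes "carrier R \<noteq> {\<zero>}"
  shows "0 < m"
proof (rule ccontr)
  assume "\<not> 0 < m"
  obtain x where x: "x \<in> carrier R" "x \<noteq> \<zero>"
    using assms zero_closed by blast
  obtain ys where ys: "ys \<in> set_pmf (enc_all Enc (pair_input \<zero> (\<ominus> \<zero>)))"
    by (meson ex_in_conv set_pmf_not_empty)
  obtain y' where y': "y' \<in> set_pmf (Enc x)"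
    by (meson ex_in_conv set_pmf_not_empty)
  have enc: "encodes (pair_input \<zero> (\<ominus> \<zero>)) ys"
    using ys by (simp add: set_pmf_enc_all)
  then have "hd ys \<in> set_pmf (Enc \<zero>)"
    by (rule encodes_pair_inputE)
  then have "x = \<zero>"
    using first_encoding_determines_input[OF zero_closed x(1) enc y'] length_encoding[OF x(1) y']
      length_encoding[OF zero_closed] \<open>\<not> 0 < m\<close> by simp
  with x show False
    by simp
qed

end

theorem mainTheorem9:
  shows "\<exists>c::real. c > 0 \<and>
    (\<forall>(R :: nat ring) n q \<sigma> m l Enc A.
       n \<ge> 2 \<longrightarrow> field R \<longrightarrow> finite (carrier R) \<longrightarrow> card (carrier R) = q \<longrightarrow>
       \<sigma> \<ge> 1 \<longrightarrow>
       is_agg_protocol R n m l Enc A \<longrightarrow> is_secure R n m Enc \<sigma> \<longrightarrow>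
       real m \<ge> c * ln (real q) / ln (real n))"
proof (intro exI[of _ "1 / 4"] conjI allI impI)
  fix R :: "nat ring" and n q \<sigma> m l Enc A
  assume n: "n \<ge> 2" and "field R" and fin: "finite (carrier R)" and q: "card (carrier R) = q"
    and \<sigma>: "\<sigma> \<ge> 1" and "is_agg_protocol R n m l Enc A" and sec: "is_secure R n m Enc \<sigma>"
  interpret field R
    by fact
  interpret agg_protocol R n m l Enc A
    by unfold_locales fact+
  have "0 < m"
    using num_messages_pos one_closed one_not_zero by blast
  have "0 < q"
    using fin q zero_closed card_gt_0_iff by blast
  have "real q \<le> 2 * real (n * m choose m)"
    using card_carrier_le_binomial[OF sec \<sigma> fin] unfolding q .
  also have "\<dots> \<le> real n ^ (4 * m)"
    using n \<open>0 < m\<close> by (rule two_binomial_mult_le_power)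
  finally have "ln (real q) \<le> ln (real n ^ (4 * m))"
    using \<open>0 < q\<close> by (intro ln_mono) auto
  then have "ln (real q) \<le> 4 * real m * ln (real n)"
    by (simp add: ln_realpow)
  then show "1 / 4 * ln (real q) / ln (real n) \<le> real m"
    using n by (simp add: field_simps)
qed simp

end
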